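(* Let $n\geq 2$ with $n\neq 4$. Each of the following statements is equivalent to $d_n < \sqrt{2}\,(p_n)^{1/2}$: 1. $(p_{n+1}+d_n)\,p_n$ is the largest odd multiple of $p_n$ that is at most $p_{n+1}^2$. 2. The open interval $(p_n^2, p_{n+1}^2)$ contains exactly $d_n$ odd multiples of $p_n$. 3. $\displaystyle \frac{d_n}{2} + \sum_{i=1}^{d_n-1} i < p_n$.
   Context: $p_n$ denotes the $n$th prime ($p_1=2$) and $d_n := p_{n+1}-p_n$. *)

theory Defs
  imports Complex_Main "HOL-Computational_Algebra.Primes"
begin

text \<open>p n is the n-th prime, 1-indexed: p 1 = 2, p 2 = 3, ...
  (p 0 is a junk value and never used.)\<close>
definition p :: "nat \<Rightarrow> nat" where
  "p n = (LEAST q. prime q \<and> card {r. prime r \<and> r \<le> q} = n)"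

definition d :: "nat \<Rightarrow> nat" where
  "d n = p (n + 1) - p n"

definition odd_multiples :: "nat \<Rightarrow> nat set" where
  "odd_multiples m = {x. \<exists>k. odd k \<and> x = k * m}"

end

theory Submission
  imports Defs
begin

text \<open>Write q = p n and g = d n, so that p (n + 1) = q + g with q odd. All three conditions
  reduce to g^2 < 2 q. The sum in (3) equals g^2 / 2. The odd multiples of q above q^2
  are the numbers (q + 2 j) q with j > 0, and (q + 2 j) q < (q + g)^2 iff 2 j q < 2 q g + g^2;
  so (1) and (2) both ask whether j = g + 1 is excluded, i.e. whether g^2 \<le> 2 q. Finally
  g^2 = 2 q is impossible for odd q, so \<le> and < agree.\<close>

lemma finite_primes_le: "finite {r::nat. prime r \<and> r \<le> x}"
  by (rule finite_subset[of _ "{..x}"]) auto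

lemma primes_le_next_prime:
  fixes q q' :: nat
  assumes "prime q'" "q < q'" "\<And>r. q < r \<Longrightarrow> r < q' \<Longrightarrow> \<not> prime r"
  shows "{r. prime r \<and> r \<le> q'} = insert q' {r. prime r \<and> r \<le> q}"
  using assms by (auto simp: le_less) (meson not_less_iff_gr_or_eq)

lemma ex_prime_card_primes_le:
  assumes "n \<ge> 1"
  shows "\<exists>q::nat. prime q \<and> card {r. prime r \<and> r \<le> q} = n"
  using assms
proof (induction n rule: dec_induct)
  case base
  have "{r::nat. prime r \<and> r \<le> 2} = {2}"
    by (auto dest: prime_ge_2_nat)
  then show ?case by (intro exI[of _ 2]) auto
next
  case (step m)
  then obtain q :: nat where q: "prime q" "card {r. prime r \<and> r \<le> q} = m"
    by blast
  define q' where "q' = (LEAST r::nat. prime r \<and> q < r)"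
  have "prime q' \<and> q < q'"
    unfolding q'_def by (rule LeastI_ex) (use bigger_prime in blast)
  then have q': "prime q'" "q < q'"
    by auto
  have "\<not> prime r" if "q < r" "r < q'" for r
    using not_less_Least[of r "\<lambda>r. prime r \<and> q < r"] that unfolding q'_def by blast
  then have "{r. prime r \<and> r \<le> q'} = insert q' {r. prime r \<and> r \<le> q}"
    using q' by (intro primes_le_next_prime)
  then have "card {r. prime r \<and> r \<le> q'} = Suc m"
    using q q' finite_primes_le by simp
  with q' show ?case by auto
qed

lemma prime_p: "n \<ge> 1 \<Longrightarrow> prime (p n)"
  and card_primes_le_p: "n \<ge> 1 \<Longrightarrow> card {r. prime r \<and> r \<le> p n} = n"
  unfolding p_def using LeastI_ex[OF ex_prime_card_primes_le] by blast+

lemma p_less_p_Suc: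
  assumes "n \<ge> 1"
  shows "p n < p (n + 1)"
proof (rule ccontr)
  assume "\<not> p n < p (n + 1)"
  then have "{r. prime r \<and> r \<le> p (n + 1)} \<subseteq> {r. prime r \<and> r \<le> p n}"
    by auto
  then have "card {r. prime r \<and> r \<le> p (n + 1)} \<le> card {r. prime r \<and> r \<le> p n}"
    by (rule card_mono[OF finite_primes_le])
  with assms show False
    by (simp add: card_primes_le_p)
qed

lemma odd_p:
  assumes "n \<ge> 2"
  shows "odd (p n)"
proof -
  have "p n \<noteq> 2"
  proof
    assume "p n = 2"
    then have "n = card {r::nat. prime r \<and> r \<le> 2}"
      using assms card_primes_le_p[of n] by simp
    also have "{r::nat. prime r \<and> r \<le> 2} = {2}"
      by (auto dest: prime_ge_2_nat)
    finally show False
      using assms by simp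
  qed
  moreover have "prime (p n)"
    using assms by (simp add: prime_p)
  ultimately show ?thesis
    using prime_ge_2_nat[of "p n"] prime_odd_nat[of "p n"] by linarith
qed

lemma less_sqrt_two_mult_sqrt_iff:
  "real g < sqrt 2 * sqrt (real q) \<longleftrightarrow> g * g < 2 * q"
proof -
  have "sqrt 2 * sqrt (real q) = sqrt (2 * real q)"
    by (simp add: real_sqrt_mult)
  moreover have "real g = sqrt (real g ^ 2)"
    by simp
  ultimately have "real g < sqrt 2 * sqrt (real q) \<longleftrightarrow> real g ^ 2 < 2 * real q"
    by (metis real_sqrt_less_iff)
  also have "\<dots> \<longleftrightarrow> real (g * g) < real (2 * q)"
    by (simp add: power2_eq_square)
  finally show ?thesis
    by linarith
qed

lemma half_plus_sum_Icc_pred_less_iff: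
  "real g / 2 + (\<Sum>i = 1..g - 1. real i) < real q \<longleftrightarrow> g * g < 2 * q"
proof -
  have "real g / 2 + (\<Sum>i = 1..g - 1. real i) = real (g * g) / 2"
  proof (cases g)
    case (Suc m)
    then show ?thesis
      using double_gauss_sum_from_Suc_0[of m, where ?'a = real] by (simp add: algebra_simps)
  qed simp
  then show ?thesis
    by linarith
qed

lemma square_neq_double_odd:
  fixes g q :: nat
  assumes "odd q"
  shows "g * g \<noteq> 2 * q"
proof
  assume sq: "g * g = 2 * q"
  then obtain c where "g = 2 * c"
    by (metis dvd_triv_left even_mult_iff evenE)
  with sq have "q = 2 * (c * c)"
    by simp
  with assms show False
    by simp
qed

lemma odd_multiple_mem_le_square:
  fixes g q :: nat
  assumes "odd q"
  shows "(q + 2 * g) * q \<in> odd_multiples q \<inter> {..(q + g) ^ 2}"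
  using assms unfolding odd_multiples_def
  by (intro IntI CollectI exI[of _ "q + 2 * g"]) (auto simp: power2_eq_square algebra_simps)

lemma odd_multiples_le_square_bounded_iff:
  fixes g q :: nat
  assumes "odd q"
  shows "(\<forall>x \<in> odd_multiples q \<inter> {..(q + g) ^ 2}. x \<le> (q + 2 * g) * q) \<longleftrightarrow> g * g < 2 * q"
proof
  assume bounded: "\<forall>x \<in> odd_multiples q \<inter> {..(q + g) ^ 2}. x \<le> (q + 2 * g) * q"
  show "g * g < 2 * q"
  proof (rule ccontr)
    assume "\<not> g * g < 2 * q"
    then have "(q + 2 * g + 2) * q \<in> odd_multiples q \<inter> {..(q + g) ^ 2}"
      using assms unfolding odd_multiples_def
      by (intro IntI CollectI exI[of _ "q + 2 * g + 2"]) (auto simp: power2_eq_square algebra_simps)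
    with bounded have "(q + 2 * g + 2) * q \<le> (q + 2 * g) * q"
      by blast
    with odd_pos[OF assms] show False
      by simp
  qed
next
  assume small_gap: "g * g < 2 * q"
  show "\<forall>x \<in> odd_multiples q \<inter> {..(q + g) ^ 2}. x \<le> (q + 2 * g) * q"
  proof
    fix x
    assume "x \<in> odd_multiples q \<inter> {..(q + g) ^ 2}"
    then obtain k where k: "odd k" "x = k * q" "k * q \<le> (q + g) ^ 2"
      unfolding odd_multiples_def by auto
    then have "k * q < (q + 2 * g + 2) * q"
      using small_gap by (simp add: power2_eq_square algebra_simps)
    then have "k < q + 2 * g + 2"
      by (rule mult_less_cancel2[THEN iffD1, THEN conjunct2])
    with k(1) assms have "k \<le> q + 2 * g"
      by presburger
    with k(2) show "x \<le> (q + 2 * g) * q"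
      by simp
  qed
qed

lemma Collect_pos_mult_less:
  fixes a b :: nat
  assumes "a > 0"
  shows "{j. 0 < j \<and> j * a < b} = {1..(b - 1) div a}"
proof -
  have "j * a < b \<longleftrightarrow> j * a \<le> b - 1" if "0 < j" for j
  proof -
    have "0 < j * a"
      using that assms by simp
    then show ?thesis
      by linarith
  qed
  then show ?thesis
    using assms by (auto simp: less_eq_div_iff_mult_less_eq)
qed

lemma odd_multiples_between_squares:
  fixes g q :: nat
  assumes "odd q"
  shows "odd_multiples q \<inter> {q ^ 2 <..< (q + g) ^ 2}
           = (\<lambda>j. (q + 2 * j) * q) ` {j. 0 < j \<and> j * (2 * q) < 2 * q * g + g * g}"
proof (intro equalityI subsetI)
  fix x
  assume "x \<in> odd_multiples q \<inter> {q ^ 2 <..< (q + g) ^ 2}"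
  then obtain k where k: "odd k" "x = k * q" "q * q < k * q" "k * q < (q + g) ^ 2"
    unfolding odd_multiples_def by (auto simp: power2_eq_square)
  then have "q < k"
    using mult_less_cancel2 by blast
  moreover have "even (k - q)"
    using k(1) assms \<open>q < k\<close> by simp
  then obtain j where "k - q = 2 * j"
    by (elim evenE)
  ultimately have j: "k = q + 2 * j" "0 < j"
    by simp_all
  with k(4) have "j * (2 * q) < 2 * q * g + g * g"
    by (simp add: power2_eq_square algebra_simps)
  with j k(2) show "x \<in> (\<lambda>j. (q + 2 * j) * q) ` {j. 0 < j \<and> j * (2 * q) < 2 * q * g + g * g}"
    by blast
next
  fix x
  assume "x \<in> (\<lambda>j. (q + 2 * j) * q) ` {j. 0 < j \<and> j * (2 * q) < 2 * q * g + g * g}"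
  then obtain j where j: "x = (q + 2 * j) * q" "0 < j" "j * (2 * q) < 2 * q * g + g * g"
    by blast
  then show "x \<in> odd_multiples q \<inter> {q ^ 2 <..< (q + g) ^ 2}"
    using assms odd_pos[OF assms] unfolding odd_multiples_def
    by (intro IntI CollectI exI[of _ "q + 2 * j"]) (auto simp: power2_eq_square algebra_simps)
qed

lemma card_odd_multiples_between_squares:
  fixes g q :: nat
  assumes "odd q"
  shows "card (odd_multiples q \<inter> {q ^ 2 <..< (q + g) ^ 2}) = (2 * q * g + g * g - 1) div (2 * q)"
proof -
  have "q > 0"
    using assms by (rule odd_pos)
  then have "inj (\<lambda>j. (q + 2 * j) * q)"
    by (auto simp: inj_on_def)
  with \<open>q > 0\<close> show ?thesis
    by (simp add: odd_multiples_between_squares[OF assms] card_image inj_on_subset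
        Collect_pos_mult_less)
qed

lemma mult_add_square_pred_div_eq_iff:
  fixes a g :: nat
  assumes "a > 0"
  shows "(a * g + g * g - 1) div a = g \<longleftrightarrow> g * g \<le> a"
proof (cases "g = 0")
  case False
  then have "g * g \<ge> 1"
    by simp
  show ?thesis
  proof
    assume "(a * g + g * g - 1) div a = g"
    then have "a * g + g * g - 1 < Suc g * a"
      using assms div_less_iff_less_mult by (metis lessI)
    then show "g * g \<le> a"
      by (simp add: algebra_simps)
  next
    assume "g * g \<le> a"
    moreover have "a * Suc g = a * g + a"
      by simp
    ultimately show "(a * g + g * g - 1) div a = g"
      using \<open>g * g \<ge> 1\<close> by (intro div_nat_eqI) linarith+
  qed
qed simp

lemma card_odd_multiples_between_squares_eq_iff:
  fixes g q :: nat
  assumes "odd q"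
  shows "card (odd_multiples q \<inter> {q ^ 2 <..< (q + g) ^ 2}) = g \<longleftrightarrow> g * g < 2 * q"
proof -
  have "card (odd_multiples q \<inter> {q ^ 2 <..< (q + g) ^ 2}) = g \<longleftrightarrow> g * g \<le> 2 * q"
    using mult_add_square_pred_div_eq_iff[of "2 * q" g] odd_pos[OF assms]
    by (simp add: card_odd_multiples_between_squares[OF assms])
  with square_neq_double_odd[OF assms, of g] show ?thesis
    by linarith
qed

theorem theorem2p8:
  fixes n :: nat
  assumes "n \<ge> 2" and "n \<noteq> 4"
  shows "((real (d n) < sqrt 2 * sqrt (real (p n))) \<longleftrightarrow>
           ((p (n + 1) + d n) * p n \<in> odd_multiples (p n) \<inter> {..p (n + 1) ^ 2} \<and>
            (\<forall>x \<in> odd_multiples (p n) \<inter> {..p (n + 1) ^ 2}. x \<le> (p (n + 1) + d n) * p n))) \<and>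
         ((real (d n) < sqrt 2 * sqrt (real (p n))) \<longleftrightarrow>
           card (odd_multiples (p n) \<inter> {p n ^ 2 <..< p (n + 1) ^ 2}) = d n) \<and>
         ((real (d n) < sqrt 2 * sqrt (real (p n))) \<longleftrightarrow>
           real (d n) / 2 + (\<Sum>i = 1..d n - 1. real i) < real (p n))"
proof -
  have odd: "odd (p n)"
    using assms(1) by (rule odd_p)
  have next_prime: "p (n + 1) = p n + d n"
    using p_less_p_Suc[of n] assms(1) unfolding d_def by simp
  have small_gap: "real (d n) < sqrt 2 * sqrt (real (p n)) \<longleftrightarrow> d n * d n < 2 * p n"
    by (rule less_sqrt_two_mult_sqrt_iff)
  have double_gap: "p n + d n + d n = p n + 2 * d n"
    by simp
  show ?thesis
    unfolding next_prime double_gap small_gap half_plus_sum_Icc_pred_less_iff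
    using odd_multiple_mem_le_square[OF odd] odd_multiples_le_square_bounded_iff[OF odd]
      card_odd_multiples_between_squares_eq_iff[OF odd]
    by blast
qed

end
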